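(* Let $m\ge2$ and, for $1\le k\le m$, let $\tilde\tau_k=t_{k+m-1}t_{k+m-2}\cdots t_{k+1}t_kt_{k+1}\cdots t_{k+m-2}t_{k+m-1}\in\tilde{\mathcal S}_{2m}$ and $\tilde\tau=\tilde\tau_1\tilde\tau_2\cdots\tilde\tau_m$. Then for all $1\le i\le m-1$ we have $\tilde\tau^{-1}t_i\tilde\tau=z^mt_{i+m}$ and $\tilde\tau^{-1}t_{i+m}\tilde\tau=z^mt_i$.
   Context: $\tilde{\mathcal S}_{2m}$ is the group with presentation $\langle z,t_1,\dots,t_{2m-1}\mid z^2=1,\ t_i^2=z\ (1\le i\le 2m-1),\ (t_it_{i+1})^3=z\ (1\le i\le 2m-2),\ t_it_j=zt_jt_i\ (|i-j|>1)\rangle$. (The element $\tilde\tau$ is a lift of the permutation $(1,m+1)(2,m+2)\cdots(m,2m)$ under $t_i\mapsto(i,i+1)$.) *)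

theory Defs
  imports "HOL-Algebra.Group"
begin

definition gprod :: "('a, 'b) monoid_scheme \<Rightarrow> 'a list \<Rightarrow> 'a" where
  "gprod G xs = foldr (\<lambda>x y. x \<otimes>\<^bsub>G\<^esub> y) xs \<one>\<^bsub>G\<^esub>"

text \<open>The defining relations of the double cover of S_{2m}, with generators z and
  t 1, ..., t (2m-1).  A statement holds in the group given by the presentation iff it holds
  for every group G and elements satisfying these relations.\<close>
definition tilde_S_rels :: "('a, 'b) monoid_scheme \<Rightarrow> nat \<Rightarrow> 'a \<Rightarrow> (nat \<Rightarrow> 'a) \<Rightarrow> bool" where
  "tilde_S_rels G m z t \<longleftrightarrow>
     z \<in> carrier G \<and> (\<forall>i. 1 \<le> i \<and> i \<le> 2*m - 1 \<longrightarrow> t i \<in> carrier G) \<and>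
     z \<otimes>\<^bsub>G\<^esub> z = \<one>\<^bsub>G\<^esub> \<and>
     (\<forall>i. 1 \<le> i \<and> i \<le> 2*m - 1 \<longrightarrow> t i \<otimes>\<^bsub>G\<^esub> t i = z) \<and>
     (\<forall>i. 1 \<le> i \<and> i \<le> 2*m - 2 \<longrightarrow> (t i \<otimes>\<^bsub>G\<^esub> t (i+1)) [^]\<^bsub>G\<^esub> (3::nat) = z) \<and>
     (\<forall>i j. 1 \<le> i \<and> i \<le> 2*m - 1 \<and> 1 \<le> j \<and> j \<le> 2*m - 1 \<and> (i + 1 < j \<or> j + 1 < i)
        \<longrightarrow> t i \<otimes>\<^bsub>G\<^esub> t j = z \<otimes>\<^bsub>G\<^esub> t j \<otimes>\<^bsub>G\<^esub> t i)"

definition tau_k :: "('a, 'b) monoid_scheme \<Rightarrow> nat \<Rightarrow> (nat \<Rightarrow> 'a) \<Rightarrow> nat \<Rightarrow> 'a" where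
  "tau_k G m t k = gprod G (map t (rev [k+1..<k+m] @ [k] @ [k+1..<k+m]))"

definition tau :: "('a, 'b) monoid_scheme \<Rightarrow> nat \<Rightarrow> (nat \<Rightarrow> 'a) \<Rightarrow> 'a" where
  "tau G m t = gprod G (map (tau_k G m t) [1..<m+1])"

end

theory Submission
  imports Defs "HOL-Combinatorics.Transposition"
begin

text \<open>The palindromic word t(b-1) \<dots> t(a+1) t a t(a+1) \<dots> t(b-1) lifts the transposition (a b);
  fixing an orientation, write e(a,b) for it and e(b,a) = z e(a,b).  Conjugating e(a,b) by a
  generator t j gives z e(s a, s b), where s = (j j+1): this is the braid relation when {a,b}
  meets {j,j+1} and the far-commutation relation otherwise.  Iterating over a word w of length
  l with permutation \<sigma> gives w^-1 e(a,b) w = z^l e(\<sigma> a, \<sigma> b).  The word for \<tau> has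
  length m(2m-1), of the parity of m, and its permutation exchanges i and i+m; since t i = e(i,i+1),
  the claim follows.\<close>

definition transposition_word :: "nat \<Rightarrow> nat \<Rightarrow> nat list" where
  "transposition_word a b = rev [Suc a..<b] @ [a] @ [Suc a..<b]"

lemma transposition_word_Suc_self: "transposition_word a (Suc a) = [a]"
  by (simp add: transposition_word_def)

lemma transposition_word_Suc: "a < b \<Longrightarrow> transposition_word a (Suc b) = b # transposition_word a b @ [b]"
  by (simp add: transposition_word_def)

lemma length_transposition_word: "a < b \<Longrightarrow> length (transposition_word a b) = 2 * (b - a) - 1"
  by (simp add: transposition_word_def)

lemma set_transposition_word: "a < b \<Longrightarrow> set (transposition_word a b) = {a..<b}"
  by (auto simp: transposition_word_def)

definition word_perm :: "nat list \<Rightarrow> nat \<Rightarrow> nat" where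
  "word_perm w = fold (\<lambda>j. transpose j (Suc j)) w"

lemma word_perm_Nil [simp]: "word_perm [] x = x"
  by (simp add: word_perm_def)

lemma word_perm_Cons [simp]: "word_perm (j # w) x = word_perm w (transpose j (Suc j) x)"
  by (simp add: word_perm_def)

lemma word_perm_append: "word_perm (u @ v) x = word_perm v (word_perm u x)"
  by (simp add: word_perm_def)

lemma word_perm_upt:
  "a \<le> b \<Longrightarrow> word_perm [a..<b] x = (if x = a then b else if a < x \<and> x \<le> b then x - 1 else x)"
proof (induction b arbitrary: x)
  case (Suc b)
  then show ?case by (cases "a = Suc b") (auto simp: word_perm_append transpose_def)
qed simp

lemma word_perm_rev_upt:
  "a \<le> b \<Longrightarrow> word_perm (rev [a..<b]) x = (if x = b then a else if a \<le> x \<and> x < b then x + 1 else x)"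
proof (induction b arbitrary: x)
  case (Suc b)
  then show ?case by (cases "a = Suc b") (auto simp: word_perm_append transpose_def)
qed simp

lemma word_perm_transposition_word: "a < b \<Longrightarrow> word_perm (transposition_word a b) x = transpose a b x"
  by (simp add: transposition_word_def word_perm_append word_perm_upt word_perm_rev_upt transpose_def)

lemma word_perm_bounded:
  "set w \<subseteq> {1..n - 1} \<Longrightarrow> x \<in> {1..n} \<Longrightarrow> word_perm w x \<in> {1..n}"
  by (induction w arbitrary: x) (auto simp: transpose_def)

lemma word_perm_inj: "x \<noteq> y \<Longrightarrow> word_perm w x \<noteq> word_perm w y"
  by (induction w arbitrary: x y) (simp_all, metis transpose_eq_imp_eq)

definition tau_word :: "nat \<Rightarrow> nat \<Rightarrow> nat list" where
  "tau_word m n = concat (map (\<lambda>k. transposition_word k (k + m)) [1..<Suc n])"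

lemma word_perm_tau_word:
  assumes "n \<le> m" "1 \<le> m"
  shows "word_perm (tau_word m n) x =
    (if 1 \<le> x \<and> x \<le> n then x + m else if m < x \<and> x \<le> m + n then x - m else x)"
  using assms(1)
proof (induction n arbitrary: x)
  case (Suc n)
  have "word_perm (transposition_word (Suc n) (Suc n + m)) y = transpose (Suc n) (Suc n + m) y" for y
    using assms(2) by (simp add: word_perm_transposition_word)
  with Suc show ?case
    by (auto simp: tau_word_def word_perm_append transpose_def)
qed (simp add: tau_word_def)

lemma length_tau_word: "1 \<le> m \<Longrightarrow> length (tau_word m n) = n * (2 * m - 1)"
  by (induction n) (simp_all add: tau_word_def length_transposition_word)

lemma set_tau_word: "1 \<le> m \<Longrightarrow> set (tau_word m m) \<subseteq> {1..2 * m - 1}"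
  by (auto simp: tau_word_def set_transposition_word)

lemma (in group) conj_eq_if_mult_eq:
  "y \<otimes> x = x \<otimes> r \<Longrightarrow> x \<in> carrier G \<Longrightarrow> y \<in> carrier G \<Longrightarrow> r \<in> carrier G \<Longrightarrow> inv x \<otimes> y \<otimes> x = r"
  by (simp add: m_assoc flip: m_assoc[of "inv x" x r])

locale tilde_S_presentation = group G for G :: "('a, 'b) monoid_scheme" (structure) +
  fixes m :: nat and z :: 'a and t :: "nat \<Rightarrow> 'a"
  assumes rels: "tilde_S_rels G m z t"
begin

lemma z_closed [simp]: "z \<in> carrier G"
  using rels by (simp add: tilde_S_rels_def)

lemma t_closed [simp]: "1 \<le> i \<Longrightarrow> i \<le> 2 * m - 1 \<Longrightarrow> t i \<in> carrier G"
  using rels by (simp add: tilde_S_rels_def)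

lemma z_square: "z \<otimes> z = \<one>"
  using rels by (simp add: tilde_S_rels_def)

lemma t_square: "1 \<le> i \<Longrightarrow> i \<le> 2 * m - 1 \<Longrightarrow> t i \<otimes> t i = z"
  using rels by (simp add: tilde_S_rels_def)

lemma t_far_commute:
  "\<lbrakk>1 \<le> i; i \<le> 2 * m - 1; 1 \<le> j; j \<le> 2 * m - 1; i + 1 < j \<or> j + 1 < i\<rbrakk>
    \<Longrightarrow> t i \<otimes> t j = z \<otimes> t j \<otimes> t i"
  using rels by (simp add: tilde_S_rels_def)

lemma t_cube: "1 \<le> i \<Longrightarrow> i + 1 \<le> 2 * m - 1 \<Longrightarrow> (t i \<otimes> t (i + 1)) [^] (3::nat) = z"
  using rels by (simp add: tilde_S_rels_def)

lemma z_z_mult [simp]: "x \<in> carrier G \<Longrightarrow> z \<otimes> (z \<otimes> x) = x"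
  by (simp add: z_square flip: m_assoc)

lemma t_t_mult [simp]: "1 \<le> i \<Longrightarrow> i \<le> 2 * m - 1 \<Longrightarrow> x \<in> carrier G \<Longrightarrow> t i \<otimes> (t i \<otimes> x) = z \<otimes> x"
  by (simp add: t_square flip: m_assoc)

lemma t_z_commute: "1 \<le> i \<Longrightarrow> i \<le> 2 * m - 1 \<Longrightarrow> t i \<otimes> z = z \<otimes> t i"
  by (metis m_assoc t_closed t_square)

lemma t_z_mult [simp]:
  "1 \<le> i \<Longrightarrow> i \<le> 2 * m - 1 \<Longrightarrow> x \<in> carrier G \<Longrightarrow> t i \<otimes> (z \<otimes> x) = z \<otimes> (t i \<otimes> x)"
  by (simp add: t_z_commute flip: m_assoc)

lemma t_far_commute_mult:
  "\<lbrakk>1 \<le> i; i \<le> 2 * m - 1; 1 \<le> j; j \<le> 2 * m - 1; i + 1 < j \<or> j + 1 < i; x \<in> carrier G\<rbrakk>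
    \<Longrightarrow> t i \<otimes> (t j \<otimes> x) = z \<otimes> (t j \<otimes> (t i \<otimes> x))"
  by (simp add: t_far_commute flip: m_assoc)

lemma z_pow: "z [^] (n::nat) = (if even n then \<one> else z)"
  by (induction n) (auto simp: z_square)

text \<open>Both sides multiplied by t(i+1) t i t(i+1) give z: the left one by the cube relation.\<close>

lemma t_braid:
  assumes "1 \<le> i" "i + 1 \<le> 2 * m - 1"
  shows "t i \<otimes> t (i + 1) \<otimes> t i = t (i + 1) \<otimes> t i \<otimes> t (i + 1)"
proof -
  let ?b = "t (i + 1) \<otimes> t i \<otimes> t (i + 1)"
  have "t i \<otimes> (t (i + 1) \<otimes> (t i \<otimes> (t (i + 1) \<otimes> (t i \<otimes> t (i + 1))))) = z"
    using t_cube[OF assms] assms by (simp add: numeral_3_eq_3 m_assoc)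
  moreover have "t (i + 1) \<otimes> (t i \<otimes> (t (i + 1) \<otimes> (t (i + 1) \<otimes> (t i \<otimes> t (i + 1))))) = z"
    using assms by (simp add: t_square flip: m_assoc) (simp add: m_assoc t_z_commute t_square)
  ultimately have "(t i \<otimes> t (i + 1) \<otimes> t i) \<otimes> ?b = ?b \<otimes> ?b"
    using assms by (simp add: m_assoc)
  then show ?thesis
    using assms by (simp add: right_cancel)
qed

lemma t_braid_mult:
  "1 \<le> i \<Longrightarrow> Suc i \<le> 2 * m - 1 \<Longrightarrow> x \<in> carrier G \<Longrightarrow>
    t i \<otimes> (t (Suc i) \<otimes> (t i \<otimes> x)) = t (Suc i) \<otimes> (t i \<otimes> (t (Suc i) \<otimes> x))"
  using t_braid by (simp flip: m_assoc)

definition word_elem :: "nat list \<Rightarrow> 'a" where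
  "word_elem w = gprod G (map t w)"

definition gen_word :: "nat list \<Rightarrow> bool" where
  "gen_word w \<longleftrightarrow> set w \<subseteq> {1..2 * m - 1}"

lemma gen_word_simps [simp]:
  "gen_word []"
  "gen_word (x # v) \<longleftrightarrow> 1 \<le> x \<and> x \<le> 2 * m - 1 \<and> gen_word v"
  "gen_word (u @ v) \<longleftrightarrow> gen_word u \<and> gen_word v"
  by (auto simp: gen_word_def)

lemma word_elem_Nil [simp]: "word_elem [] = \<one>"
  by (simp add: word_elem_def gprod_def)

lemma word_elem_Cons [simp]: "word_elem (x # w) = t x \<otimes> word_elem w"
  by (simp add: word_elem_def gprod_def)

lemma word_elem_closed [simp]: "gen_word w \<Longrightarrow> word_elem w \<in> carrier G"
  by (induction w) auto

lemma word_elem_append: "gen_word u \<Longrightarrow> gen_word v \<Longrightarrow> word_elem (u @ v) = word_elem u \<otimes> word_elem v"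
  by (induction u) (auto simp: m_assoc)

lemma word_elem_concat:
  "(\<forall>w\<in>set ws. gen_word w) \<Longrightarrow> word_elem (concat ws) = gprod G (map word_elem ws)"
proof (induction ws)
  case (Cons w ws)
  have "gen_word (concat ws)"
    using Cons.prems by (auto simp: gen_word_def)
  with Cons show ?case
    by (simp add: word_elem_append gprod_def)
qed (simp add: gprod_def)

lemma z_word_elem_commute: "gen_word w \<Longrightarrow> z \<otimes> word_elem w = word_elem w \<otimes> z"
proof (induction w)
  case (Cons x w)
  have "z \<otimes> word_elem (x # w) = t x \<otimes> (z \<otimes> word_elem w)"
    using Cons.prems by (simp add: m_assoc)
  also have "\<dots> = t x \<otimes> (word_elem w \<otimes> z)"
    using Cons by simp
  finally show ?case
    using Cons.prems by (simp add: m_assoc)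
qed simp

lemma word_elem_far_commute:
  assumes "gen_word w" "1 \<le> j" "j \<le> 2 * m - 1" "\<forall>x\<in>set w. x + 1 < j \<or> j + 1 < x"
  shows "word_elem w \<otimes> t j = z [^] length w \<otimes> t j \<otimes> word_elem w"
  using assms
proof (induction w)
  case (Cons x w)
  then have IH: "word_elem w \<otimes> t j = z [^] length w \<otimes> t j \<otimes> word_elem w"
    by auto
  have "word_elem (x # w) \<otimes> t j = t x \<otimes> (z [^] length w \<otimes> (t j \<otimes> word_elem w))"
    using Cons IH by (simp add: m_assoc)
  also have "\<dots> = z [^] length w \<otimes> (z \<otimes> (t j \<otimes> (t x \<otimes> word_elem w)))"
    using Cons by (simp add: z_pow t_far_commute_mult)
  also have "\<dots> = z [^] length (x # w) \<otimes> t j \<otimes> word_elem (x # w)"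
    using Cons by (simp add: z_pow m_assoc z_square flip: m_assoc)
  finally show ?case .
qed simp

definition transp_elem :: "nat \<Rightarrow> nat \<Rightarrow> 'a" where
  "transp_elem a b = word_elem (transposition_word a b)"

lemma gen_word_transposition_word [simp]:
  "1 \<le> a \<Longrightarrow> a < b \<Longrightarrow> b \<le> 2 * m \<Longrightarrow> gen_word (transposition_word a b)"
  by (auto simp: gen_word_def set_transposition_word)

lemma transp_elem_closed [simp]: "1 \<le> a \<Longrightarrow> a < b \<Longrightarrow> b \<le> 2 * m \<Longrightarrow> transp_elem a b \<in> carrier G"
  by (simp add: transp_elem_def)

lemma transp_elem_Suc_self: "transp_elem a (Suc a) = t a \<otimes> \<one>"
  by (simp add: transp_elem_def transposition_word_Suc_self)

lemma transp_elem_Suc: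
  "1 \<le> a \<Longrightarrow> a < b \<Longrightarrow> Suc b \<le> 2 * m \<Longrightarrow> transp_elem a (Suc b) = t b \<otimes> (transp_elem a b \<otimes> t b)"
  by (simp add: transp_elem_def transposition_word_Suc word_elem_append)

lemma transp_elem_z_commute:
  "1 \<le> a \<Longrightarrow> a < b \<Longrightarrow> b \<le> 2 * m \<Longrightarrow> transp_elem a b \<otimes> z = z \<otimes> transp_elem a b"
  unfolding transp_elem_def by (simp add: z_word_elem_commute)

lemma transp_elem_z_mult:
  "1 \<le> a \<Longrightarrow> a < b \<Longrightarrow> b \<le> 2 * m \<Longrightarrow> x \<in> carrier G \<Longrightarrow>
    transp_elem a b \<otimes> (z \<otimes> x) = z \<otimes> (transp_elem a b \<otimes> x)"
  by (simp add: transp_elem_z_commute flip: m_assoc)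

lemma transp_elem_far_commute:
  assumes "1 \<le> a" "a < b" "b \<le> 2 * m" "1 \<le> j" "j \<le> 2 * m - 1" "j + 1 < a \<or> b < j"
  shows "transp_elem a b \<otimes> t j = z \<otimes> (t j \<otimes> transp_elem a b)"
proof -
  have "transp_elem a b \<otimes> t j = z [^] length (transposition_word a b) \<otimes> t j \<otimes> transp_elem a b"
    unfolding transp_elem_def using assms
    by (intro word_elem_far_commute) (auto simp: set_transposition_word)
  moreover have "odd (length (transposition_word a b))"
    using assms by (simp add: length_transposition_word)
  ultimately show ?thesis
    using assms by (simp add: z_pow m_assoc)
qed

lemma transp_elem_far_commute_mult:
  "\<lbrakk>1 \<le> a; a < b; b \<le> 2 * m; 1 \<le> j; j \<le> 2 * m - 1; j + 1 < a \<or> b < j; x \<in> carrier G\<rbrakk>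
    \<Longrightarrow> transp_elem a b \<otimes> (t j \<otimes> x) = z \<otimes> (t j \<otimes> (transp_elem a b \<otimes> x))"
  by (simp add: transp_elem_far_commute flip: m_assoc)

lemma transp_elem_left:
  assumes "1 \<le> a" "Suc (Suc a) \<le> b" "b \<le> 2 * m"
  shows "transp_elem a b = t a \<otimes> (transp_elem (Suc a) b \<otimes> t a)"
  using assms(2,3)
proof (induction b rule: dec_induct)
  case base
  have "transp_elem a (Suc (Suc a)) = t (a + 1) \<otimes> (t a \<otimes> (t (a + 1) \<otimes> \<one>))"
    using assms base by (simp add: transp_elem_Suc transp_elem_Suc_self m_assoc)
  also have "\<dots> = t a \<otimes> (t (a + 1) \<otimes> (t a \<otimes> \<one>))"
    using assms base t_braid[of a] by (simp add: m_assoc)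
  also have "\<dots> = t a \<otimes> (transp_elem (Suc a) (Suc (Suc a)) \<otimes> t a)"
    using assms base by (simp add: transp_elem_Suc_self m_assoc)
  finally show ?case .
next
  case (step n)
  have n: "1 \<le> n" "n \<le> 2 * m - 1" "Suc n \<le> 2 * m"
    using step assms by auto
  have "transp_elem a (Suc n) = t n \<otimes> (t a \<otimes> (transp_elem (Suc a) n \<otimes> (t a \<otimes> t n)))"
    using step assms n by (simp add: transp_elem_Suc m_assoc)
  also have "\<dots> = z \<otimes> (t a \<otimes> (t n \<otimes> (transp_elem (Suc a) n \<otimes> (z \<otimes> (t n \<otimes> t a)))))"
    using step assms n by (simp add: t_far_commute_mult[of n a] t_far_commute[of a n] m_assoc)
  also have "\<dots> = t a \<otimes> (t n \<otimes> (transp_elem (Suc a) n \<otimes> (t n \<otimes> t a)))"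
    using step assms n by (simp add: transp_elem_z_mult)
  also have "\<dots> = t a \<otimes> (transp_elem (Suc a) (Suc n) \<otimes> t a)"
    using step assms n by (simp add: transp_elem_Suc m_assoc)
  finally show ?case .
qed

lemma transp_elem_inner_commute:
  assumes "1 \<le> a" "a < j" "Suc (Suc j) \<le> b" "b \<le> 2 * m"
  shows "transp_elem a b \<otimes> t j = z \<otimes> (t j \<otimes> transp_elem a b)"
  using assms(3,4)
proof (induction b rule: dec_induct)
  case base
  have j: "j + 1 \<le> 2 * m - 1" "1 \<le> j"
    using assms base by auto
  have "transp_elem a (Suc (Suc j)) \<otimes> t j =
      t (j + 1) \<otimes> (t j \<otimes> (transp_elem a j \<otimes> (t j \<otimes> (t (j + 1) \<otimes> t j))))"
    using assms base by (simp add: transp_elem_Suc m_assoc)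
  also have "\<dots> = t (j + 1) \<otimes> (t j \<otimes> (transp_elem a j \<otimes> (t (j + 1) \<otimes> (t j \<otimes> t (j + 1)))))"
    using assms j t_braid[of j] by (simp add: m_assoc)
  also have "\<dots> = z \<otimes> (t (j + 1) \<otimes> (t j \<otimes> (t (j + 1) \<otimes> (transp_elem a j \<otimes> (t j \<otimes> t (j + 1))))))"
    using assms j by (simp add: transp_elem_far_commute_mult[of a j "Suc j"])
  also have "\<dots> = z \<otimes> (t j \<otimes> (t (j + 1) \<otimes> (t j \<otimes> (transp_elem a j \<otimes> (t j \<otimes> t (j + 1))))))"
    using assms j by (simp add: t_braid_mult)
  also have "\<dots> = z \<otimes> (t j \<otimes> transp_elem a (Suc (Suc j)))"
    using assms base by (simp add: transp_elem_Suc m_assoc)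
  finally show ?case .
next
  case (step n)
  have n: "Suc n \<le> 2 * m" "1 \<le> n" "n \<le> 2 * m - 1" "1 \<le> j" "j \<le> 2 * m - 1"
    using step assms by auto
  have swap: "transp_elem a n \<otimes> (t j \<otimes> t n) = z \<otimes> (t j \<otimes> (transp_elem a n \<otimes> t n))"
    using step assms n by (simp flip: m_assoc)
  have "transp_elem a (Suc n) \<otimes> t j = t n \<otimes> (transp_elem a n \<otimes> (z \<otimes> (t j \<otimes> t n)))"
    using step assms n by (simp add: transp_elem_Suc t_far_commute[of n j] m_assoc)
  also have "\<dots> = t n \<otimes> (z \<otimes> (z \<otimes> (t j \<otimes> (transp_elem a n \<otimes> t n))))"
    using step assms n by (simp add: transp_elem_z_mult swap)
  also have "\<dots> = z \<otimes> (t j \<otimes> (t n \<otimes> (transp_elem a n \<otimes> t n)))"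
    using step assms n by (simp add: t_far_commute_mult[of n j])
  also have "\<dots> = z \<otimes> (t j \<otimes> transp_elem a (Suc n))"
    using step assms n by (simp add: transp_elem_Suc m_assoc)
  finally show ?case .
qed

definition transp_lift :: "nat \<Rightarrow> nat \<Rightarrow> 'a" where
  "transp_lift a b = (if a < b then transp_elem a b else z \<otimes> transp_elem b a)"

lemma transp_lift_closed [simp]:
  "a \<in> {1..2 * m} \<Longrightarrow> b \<in> {1..2 * m} \<Longrightarrow> a \<noteq> b \<Longrightarrow> transp_lift a b \<in> carrier G"
  by (simp add: transp_lift_def)

lemma transp_lift_swap:
  "a \<in> {1..2 * m} \<Longrightarrow> b \<in> {1..2 * m} \<Longrightarrow> a \<noteq> b \<Longrightarrow> transp_lift a b = z \<otimes> transp_lift b a"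
  by (auto simp: transp_lift_def)

lemma transp_lift_Suc_self: "1 \<le> a \<Longrightarrow> a \<le> 2 * m - 1 \<Longrightarrow> transp_lift a (Suc a) = t a"
  by (simp add: transp_lift_def transp_elem_Suc_self)

lemma transp_elem_mult_gen:
  assumes "1 \<le> a" "a < b" "b \<le> 2 * m" "1 \<le> j" "j \<le> 2 * m - 1"
  shows "transp_elem a b \<otimes> t j = t j \<otimes> (z \<otimes> transp_lift (transpose j (Suc j) a) (transpose j (Suc j) b))"
proof -
  let ?s = "transpose j (Suc j)"
  consider "j + 1 < a \<or> b < j" | "a < j \<and> j + 1 < b" | "j = b" | "Suc j = a"
    | "j = a \<and> b = Suc a" | "j = a \<and> Suc a < b" | "Suc j = b \<and> a < j"
    using assms by linarith
  then show ?thesis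
  proof cases
    case 1
    then have "?s a = a" "?s b = b"
      using assms by (auto simp: transpose_def)
    with 1 show ?thesis
      using assms by (simp add: transp_elem_far_commute transp_lift_def)
  next
    case 2
    then have "?s a = a" "?s b = b"
      using assms by (auto simp: transpose_def)
    with 2 show ?thesis
      using assms by (simp add: transp_elem_inner_commute transp_lift_def)
  next
    case 3
    then have "?s a = a" "?s b = Suc b"
      using assms by (auto simp: transpose_def)
    with 3 show ?thesis
      using assms by (simp add: transp_elem_Suc transp_lift_def m_assoc)
  next
    case 4
    then have "?s a = j" "?s b = b"
      using assms by (auto simp: transpose_def)
    with 4 show ?thesis
      using assms transp_elem_left[of j b] by (simp add: transp_lift_def m_assoc)
  next
    case 5
    then have "?s a = Suc a" "?s b = a"
      using assms by (auto simp: transpose_def)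
    with 5 show ?thesis
      using assms by (simp add: transp_elem_Suc_self transp_lift_def m_assoc)
  next
    case 6
    then have "?s a = Suc a" "?s b = b"
      using assms by (auto simp: transpose_def)
    with 6 show ?thesis
      using assms transp_elem_left[of a b]
      by (simp add: transp_lift_def m_assoc transp_elem_z_commute t_square)
  next
    case 7
    then have "?s a = a" "?s b = j"
      using assms by (auto simp: transpose_def)
    with 7 show ?thesis
      using assms transp_elem_Suc[of a j]
      by (simp add: transp_lift_def m_assoc transp_elem_z_commute t_square)
  qed
qed

lemma transp_lift_mult_gen:
  assumes "a \<in> {1..2 * m}" "b \<in> {1..2 * m}" "a \<noteq> b" "1 \<le> j" "j \<le> 2 * m - 1"
  shows "transp_lift a b \<otimes> t j = t j \<otimes> (z \<otimes> transp_lift (transpose j (Suc j) a) (transpose j (Suc j) b))"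
proof (cases "a < b")
  case True
  then show ?thesis
    using assms transp_elem_mult_gen[of a b j] by (simp add: transp_lift_def)
next
  case False
  let ?s = "transpose j (Suc j)"
  have s: "?s a \<in> {1..2 * m}" "?s b \<in> {1..2 * m}" "?s a \<noteq> ?s b"
    using assms by (auto simp: transpose_def)
  have "transp_lift a b \<otimes> t j = z \<otimes> (transp_elem b a \<otimes> t j)"
    using False assms by (simp add: transp_lift_def m_assoc)
  also have "\<dots> = z \<otimes> (t j \<otimes> (z \<otimes> transp_lift (?s b) (?s a)))"
    using False assms transp_elem_mult_gen[of b a j] by simp
  also have "\<dots> = t j \<otimes> (z \<otimes> transp_lift (?s a) (?s b))"
    using s assms transp_lift_swap[of "?s b" "?s a"] by simp
  finally show ?thesis .
qed

lemma transp_lift_mult_word: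
  assumes "gen_word w" "a \<in> {1..2 * m}" "b \<in> {1..2 * m}" "a \<noteq> b"
  shows "transp_lift a b \<otimes> word_elem w = word_elem w \<otimes> (z [^] length w \<otimes> transp_lift (word_perm w a) (word_perm w b))"
  using assms
proof (induction w arbitrary: a b)
  case (Cons j w)
  let ?s = "transpose j (Suc j)"
  have s: "?s a \<in> {1..2 * m}" "?s b \<in> {1..2 * m}" "?s a \<noteq> ?s b"
    using Cons.prems by (auto simp: transpose_def)
  have "transp_lift (word_perm w (?s a)) (word_perm w (?s b)) \<in> carrier G"
    using s Cons.prems word_perm_bounded[of w "2 * m"] word_perm_inj[of "?s a" "?s b" w]
    by (simp add: gen_word_def)
  moreover have "transp_lift a b \<otimes> word_elem (j # w) = t j \<otimes> (z \<otimes> (transp_lift (?s a) (?s b) \<otimes> word_elem w))"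
    using Cons.prems transp_lift_mult_gen[of a b j] s by (simp flip: m_assoc)
  ultimately show ?case
    using Cons s z_word_elem_commute[of w] by (simp add: z_pow m_assoc z_square flip: m_assoc)
qed simp

lemma tau_eq_word_elem:
  assumes "1 \<le> m"
  shows "tau G m t = word_elem (tau_word m m)"
proof -
  have "map (tau_k G m t) [1..<m+1] = map word_elem (map (\<lambda>k. transposition_word k (k + m)) [1..<m+1])"
    by (simp add: tau_k_def word_elem_def transposition_word_def)
  then have "tau G m t = gprod G (map word_elem (map (\<lambda>k. transposition_word k (k + m)) [1..<m+1]))"
    by (simp only: tau_def)
  also have "\<dots> = word_elem (tau_word m m)"
    using assms word_elem_concat[of "map (\<lambda>k. transposition_word k (k + m)) [1..<m+1]"]
    by (simp add: tau_word_def)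
  finally show ?thesis .
qed

lemma tau_conj_t:
  assumes "1 \<le> i" "i \<le> m - 1"
  shows "inv (tau G m t) \<otimes> t i \<otimes> tau G m t = z [^] m \<otimes> t (i + m)"
    and "inv (tau G m t) \<otimes> t (i + m) \<otimes> tau G m t = z [^] m \<otimes> t i"
proof -
  have m: "1 \<le> m" and gen: "gen_word (tau_word m m)"
    using assms set_tau_word[of m] by (auto simp: gen_word_def)
  have "even (m * (2 * m - 1)) = even m"
    using m by simp
  then have z_len: "z [^] length (tau_word m m) = z [^] m"
    using m by (simp add: length_tau_word z_pow)
  have conj: "inv (tau G m t) \<otimes> transp_lift a (Suc a) \<otimes> tau G m t = z [^] m \<otimes> transp_lift b (Suc b)"
    if "word_perm (tau_word m m) a = b" "word_perm (tau_word m m) (Suc a) = Suc b"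
      "a \<in> {1..2 * m - 1}" "b \<in> {1..2 * m - 1}" for a b
    unfolding tau_eq_word_elem[OF m] using that gen
    by (intro conj_eq_if_mult_eq) (auto simp: transp_lift_mult_word z_len)
  have "word_perm (tau_word m m) i = i + m" "word_perm (tau_word m m) (Suc i) = Suc (i + m)"
    "word_perm (tau_word m m) (i + m) = i" "word_perm (tau_word m m) (Suc (i + m)) = Suc i"
    using assms m by (auto simp: word_perm_tau_word)
  then show "inv (tau G m t) \<otimes> t i \<otimes> tau G m t = z [^] m \<otimes> t (i + m)"
    and "inv (tau G m t) \<otimes> t (i + m) \<otimes> tau G m t = z [^] m \<otimes> t i"
    using conj[of i "i + m"] conj[of "i + m" i] assms by (simp_all add: transp_lift_Suc_self)
qed

end

theorem lemma4p5:
  fixes G :: "('a, 'b) monoid_scheme" and m :: nat and z :: 'a and t :: "nat \<Rightarrow> 'a"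
  assumes "group G" and "m \<ge> 2" and "tilde_S_rels G m z t"
  shows "\<forall>i. 1 \<le> i \<and> i \<le> m - 1 \<longrightarrow>
           inv\<^bsub>G\<^esub> (tau G m t) \<otimes>\<^bsub>G\<^esub> t i \<otimes>\<^bsub>G\<^esub> tau G m t = z [^]\<^bsub>G\<^esub> m \<otimes>\<^bsub>G\<^esub> t (i + m) \<and>
           inv\<^bsub>G\<^esub> (tau G m t) \<otimes>\<^bsub>G\<^esub> t (i + m) \<otimes>\<^bsub>G\<^esub> tau G m t = z [^]\<^bsub>G\<^esub> m \<otimes>\<^bsub>G\<^esub> t i"
proof -
  interpret tilde_S_presentation G m z t
    using assms by (simp add: tilde_S_presentation_def tilde_S_presentation_axioms_def)
  show ?thesis
    using tau_conj_t by blast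
qed

end
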